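(* Suppose Assumptions 1–4 hold and $p$ is convex. Let $\mathbf{x}$ be a Cournot candidate which is not socially optimal, and let $\alpha_n=C_n'(x_n)$ for each $n$. Consider the modified model in which each cost function $C_n$ is replaced by $\overline C_n(x)=\alpha_n x$ for $x\ge0$ (same $p$, same $N$). Then for the modified model Assumptions 1–4 still hold, $\mathbf{x}$ is a Cournot candidate, and its efficiency $\overline\gamma(\mathbf{x})$ in the modified model satisfies $0<\overline\gamma(\mathbf{x})\le\gamma(\mathbf{x})$, where $\gamma(\mathbf{x})$ is its efficiency in the original model.
   Context: Cournot model: $N$ suppliers, inverse demand $p:[0,\infty)\to[0,\infty)$, supplier $n$ has cost $C_n:[0,\infty)\to[0,\infty)$ and chooses $x_n\ge0$; $X=\sum_n x_n$. $\partial_\pm$ denote right/left derivatives; $C_n'(0)$ is the right derivative at $0$. Assumption 1: each $C_n$ is convex, continuous, nondecreasing on $[0,\infty)$, continuously differentiable on $(0,\infty)$, with $C_n(0)=0$. Assumption 2: $p$ is continuous, nonnegative, nonincreasing, $p(0)>0$; its right derivative at $0$ exists and at every $q>0$ its left and right derivatives exist. Assumption 3: there exists $R>0$ such that $p(R)\le\min_n C_n'(0)$. Assumption 4: $p(0)>\min_n C_n'(0)$. Social welfare of $\mathbf{x}\ge0$: $W(\mathbf{x})=\int_0^X p(q)\,dq-\sum_{n=1}^N C_n(x_n)$; a social optimum $\mathbf{x}^S$ maximizes $W$ over nonnegative vectors (one exists under these assumptions). Efficiency of $\mathbf{x}\ge0$: $\gamma(\mathbf{x})=W(\mathbf{x})/W(\mathbf{x}^S)$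 (the denominator is positive and independent of the choice of social optimum). A nonnegative vector $\mathbf{x}$ is a Cournot candidate if for every $n$: $C_n'(x_n)\le p(X)+x_n\,\partial_-p(X)$ whenever $x_n>0$, and $C_n'(x_n)\ge p(X)+x_n\,\partial_+p(X)$. *)

theory Defs
  imports "HOL-Analysis.Analysis"
begin

text \<open>Suppliers are indexed by n < N; a production vector is a function nat => real,
  only its values at indices n < N matter.\<close>

definition rderiv :: "(real \<Rightarrow> real) \<Rightarrow> real \<Rightarrow> real" where
  "rderiv f x = (THE D. (f has_real_derivative D) (at x within {x..}))"

definition lderiv :: "(real \<Rightarrow> real) \<Rightarrow> real \<Rightarrow> real" where
  "lderiv f x = (THE D. (f has_real_derivative D) (at x within {..x}))"

definition nonneg_vec :: "nat \<Rightarrow> (nat \<Rightarrow> real) \<Rightarrow> bool" where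
  "nonneg_vec N x \<longleftrightarrow> (\<forall>n<N. 0 \<le> x n)"

definition total :: "nat \<Rightarrow> (nat \<Rightarrow> real) \<Rightarrow> real" where
  "total N x = (\<Sum>n<N. x n)"

definition assumption1 :: "nat \<Rightarrow> (nat \<Rightarrow> real \<Rightarrow> real) \<Rightarrow> bool" where
  "assumption1 N C \<longleftrightarrow> (\<forall>n<N.
      convex_on {0..} (C n) \<and> continuous_on {0..} (C n) \<and> mono_on {0..} (C n) \<and>
      (\<forall>x>0. C n differentiable (at x)) \<and> continuous_on {0<..} (deriv (C n)) \<and>
      C n 0 = 0)"

definition assumption2 :: "(real \<Rightarrow> real) \<Rightarrow> bool" where
  "assumption2 p \<longleftrightarrow>
      continuous_on {0..} p \<and> (\<forall>q\<ge>0. 0 \<le> p q) \<and>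
      (\<forall>a b. 0 \<le> a \<and> a \<le> b \<longrightarrow> p b \<le> p a) \<and> 0 < p 0 \<and>
      (\<exists>D. (p has_real_derivative D) (at 0 within {0..})) \<and>
      (\<forall>q>0. (\<exists>D. (p has_real_derivative D) (at q within {..q})) \<and>
              (\<exists>D. (p has_real_derivative D) (at q within {q..})))"

definition min_marginal_cost_at_0 :: "nat \<Rightarrow> (nat \<Rightarrow> real \<Rightarrow> real) \<Rightarrow> real" where
  "min_marginal_cost_at_0 N C = Min ((\<lambda>n. rderiv (C n) 0) ` {..<N})"

definition assumption3 :: "nat \<Rightarrow> (real \<Rightarrow> real) \<Rightarrow> (nat \<Rightarrow> real \<Rightarrow> real) \<Rightarrow> bool" where
  "assumption3 N p C \<longleftrightarrow> (\<exists>R>0. p R \<le> min_marginal_cost_at_0 N C)"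

definition assumption4 :: "nat \<Rightarrow> (real \<Rightarrow> real) \<Rightarrow> (nat \<Rightarrow> real \<Rightarrow> real) \<Rightarrow> bool" where
  "assumption4 N p C \<longleftrightarrow> p 0 > min_marginal_cost_at_0 N C"

definition welfare :: "nat \<Rightarrow> (real \<Rightarrow> real) \<Rightarrow> (nat \<Rightarrow> real \<Rightarrow> real) \<Rightarrow> (nat \<Rightarrow> real) \<Rightarrow> real" where
  "welfare N p C x = integral {0..total N x} p - (\<Sum>n<N. C n (x n))"

definition social_optimum :: "nat \<Rightarrow> (real \<Rightarrow> real) \<Rightarrow> (nat \<Rightarrow> real \<Rightarrow> real) \<Rightarrow> (nat \<Rightarrow> real) \<Rightarrow> bool" where
  "social_optimum N p C x \<longleftrightarrow> nonneg_vec N x \<and>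
      (\<forall>y. nonneg_vec N y \<longrightarrow> welfare N p C y \<le> welfare N p C x)"

definition efficiency :: "nat \<Rightarrow> (real \<Rightarrow> real) \<Rightarrow> (nat \<Rightarrow> real \<Rightarrow> real) \<Rightarrow> (nat \<Rightarrow> real) \<Rightarrow> real" where
  "efficiency N p C x = welfare N p C x / welfare N p C (SOME xS. social_optimum N p C xS)"

definition cournot_candidate :: "nat \<Rightarrow> (real \<Rightarrow> real) \<Rightarrow> (nat \<Rightarrow> real \<Rightarrow> real) \<Rightarrow> (nat \<Rightarrow> real) \<Rightarrow> bool" where
  "cournot_candidate N p C x \<longleftrightarrow> nonneg_vec N x \<and>
     (\<forall>n<N. (0 < x n \<longrightarrow> rderiv (C n) (x n) \<le> p (total N x) + x n * lderiv p (total N x)) \<and>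
            rderiv (C n) (x n) \<ge> p (total N x) + x n * rderiv p (total N x))"

end

theory Submission
  imports Defs
begin

text \<open>
  Let x be a Cournot candidate with aggregate output X and put a_n = C_n'(x_n).

  (1) Convexity of C_n gives the subgradient inequality
      C_n(y) \<ge> C_n(x_n) + a_n (y - x_n), and 0 \<le> C_n'(0) \<le> a_n.  Hence the
      linear costs satisfy Assumptions 1 and 3, and they have the same marginal
      costs at x, so x stays a candidate.
  (2) The first-order conditions of x give  \<Sum> a_n x_n \<le> X p(X) + p'_-(X) \<Sum> x_n^2,
      and for convex p this is strictly below \<integral>_0^X p; so the welfare a of x
      in the linear model is positive, which in turn yields Assumption 4 for it.
  (3) Under Assumptions 1-3 a social optimum exists (maximise welfare over a box,
      and push every larger output vector back into the box).
  (4) With D = W(x) - a \<ge> 0 the subgradient inequality gives W(y) \<le> W_lin(y) + D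
      for all y; so with optimal welfares b (linear) and c (original) we have
      a \<le> b, a + D \<le> c \<le> b + D, whence a/b \<le> (a + D)/c.
\<close>


lemma rderiv_eq:
  assumes "(f has_real_derivative D) (at x within {x..})"
  shows "rderiv f x = D"
  unfolding rderiv_def
proof (rule the_equality)
  show "(f has_real_derivative D) (at x within {x..})" by fact
  fix D' assume "(f has_real_derivative D') (at x within {x..})"
  then show "D' = D" using assms has_field_derivative_unique[of f D' x "{x..}" D]
    by (simp add: at_within_Ici_at_right)
qed

lemma lderiv_eq:
  assumes "(f has_real_derivative D) (at x within {..x})"
  shows "lderiv f x = D"
  unfolding lderiv_def
proof (rule the_equality)
  show "(f has_real_derivative D) (at x within {..x})" by fact
  fix D' assume "(f has_real_derivative D') (at x within {..x})"
  then show "D' = D" using assms has_field_derivative_unique[of f D' x "{..x}" D]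
    by (simp add: at_within_Iic_at_left)
qed

lemma rderiv_linear: "rderiv (\<lambda>y. a * y) z = (a::real)"
  by (rule rderiv_eq) (auto intro!: derivative_eq_intros)


section \<open>Convex nondecreasing cost functions\<close>

locale convex_cost =
  fixes f :: "real \<Rightarrow> real"
  assumes convex: "convex_on {0..} f" and mono: "mono_on {0..} f"
    and differentiable: "\<And>x. x > 0 \<Longrightarrow> f differentiable (at x)"
begin

lemma slope_mono:
  assumes "0 < a" "a \<le> b"
  shows "(f a - f 0) / a \<le> (f b - f 0) / b"
proof (cases "a = b")
  case False
  then have "a < b" using assms by simp
  from convex_on_slope_le(1)[OF convex, of 0 b a] assms this
  show ?thesis by (simp add: divide_simps) (metis minus_diff_eq mult_minus_left)
qed simp

lemma slope_nonneg: "0 < a \<Longrightarrow> 0 \<le> (f a - f 0) / a"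
  using mono by (auto simp: mono_on_def)

text \<open>Monotone bounded difference quotients converge: the right derivative at 0 exists.\<close>

lemma rderiv0_slope_limit: "((\<lambda>a. (f a - f 0) / a) \<longlongrightarrow> rderiv f 0) (at_right 0)"
proof -
  define d where "d = Inf ((\<lambda>a. (f a - f 0) / a) ` ({0<..} \<inter> UNIV))"
  have "((\<lambda>a. (f a - f 0) / a) \<longlongrightarrow> d) (at 0 within ({0<..} \<inter> UNIV))"
    unfolding d_def
    by (rule Lim_right_bound[where K=0]) (auto intro: slope_mono slope_nonneg)
  then have lim: "((\<lambda>a. (f a - f 0) / a) \<longlongrightarrow> d) (at_right 0)" by simp
  then have "(f has_real_derivative d) (at 0 within {0..})"
    by (simp add: has_field_derivative_iff at_within_Ici_at_right)
  with lim show ?thesis by (simp add: rderiv_eq)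
qed

lemma rderiv0_le_slope:
  assumes "0 < s" shows "rderiv f 0 \<le> (f s - f 0) / s"
proof -
  have "eventually (\<lambda>a. (f a - f 0) / a \<le> (f s - f 0) / s) (at_right 0)"
    using eventually_at_right_real[OF assms] by eventually_elim (auto intro: slope_mono)
  with rderiv0_slope_limit show ?thesis by (intro tendsto_upperbound) auto
qed

lemma rderiv0_nonneg: "0 \<le> rderiv f 0"
proof -
  have "eventually (\<lambda>a. 0 \<le> (f a - f 0) / a) (at_right 0)"
    using eventually_at_right_real[OF zero_less_one] by eventually_elim (auto intro: slope_nonneg)
  with rderiv0_slope_limit show ?thesis by (intro tendsto_lowerbound) auto
qed

lemma has_deriv_pos: "0 < t \<Longrightarrow> (f has_real_derivative rderiv f t) (at t)"
proof -
  assume "0 < t"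
  then have "(f has_real_derivative deriv f t) (at t)"
    using differentiable by (simp add: DERIV_deriv_iff_real_differentiable)
  moreover from this have "rderiv f t = deriv f t"
    by (intro rderiv_eq) (rule has_field_derivative_at_within)
  ultimately show ?thesis by simp
qed

lemma subgradient:
  assumes "0 \<le> t" "0 \<le> y"
  shows "f t + rderiv f t * (y - t) \<le> f y"
proof (cases "t = 0")
  case True
  show ?thesis
  proof (cases "y = 0")
    case False
    with assms have "0 < y" by simp
    from rderiv0_le_slope[OF this] have "rderiv f 0 * y \<le> f y - f 0"
      using \<open>0 < y\<close> by (simp add: pos_le_divide_eq)
    with True show ?thesis by simp
  qed (use True in simp)
next
  case False
  with assms have "0 < t" by simp
  have "rderiv f t * (y - t) \<le> f y - f t"
  proof (rule convex_on_imp_above_tangent[OF convex])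
    show "connected {0::real..}" by (simp add: is_interval_connected)
    show "t \<in> interior {0..}" "y \<in> {0..}" using \<open>0 < t\<close> assms by auto
    show "(f has_real_derivative rderiv f t) (at t within {0..})"
      using has_deriv_pos[OF \<open>0 < t\<close>] by (rule has_field_derivative_at_within)
  qed
  then show ?thesis by linarith
qed

lemma rderiv0_le: assumes "0 \<le> t" shows "rderiv f 0 \<le> rderiv f t"
proof (cases "t = 0")
  case False
  with assms have "0 < t" by simp
  have "(f t - f 0) / t \<le> rderiv f t"
    using subgradient[OF assms, of 0] \<open>0 < t\<close> by (simp add: pos_divide_le_eq)
  with rderiv0_le_slope[OF \<open>0 < t\<close>] show ?thesis by simp
qed simp

lemma chord:
  assumes "0 \<le> b" "b \<le> a"
  shows "rderiv f 0 * (a - b) \<le> f a - f b"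
proof -
  have "rderiv f 0 * (a - b) \<le> rderiv f b * (a - b)"
    using rderiv0_le[OF assms(1)] assms by (intro mult_right_mono) auto
  with subgradient[OF assms(1), of a] assms show ?thesis by linarith
qed

end

lemma convex_cost_of_assumption1:
  "assumption1 N C \<Longrightarrow> n < N \<Longrightarrow> convex_cost (C n)"
  unfolding assumption1_def convex_cost_def by auto


section \<open>Inverse demand\<close>

locale inverse_demand =
  fixes p :: "real \<Rightarrow> real"
  assumes assm2: "assumption2 p"
begin

lemma continuous: "continuous_on {0..} p"
  using assm2 by (simp add: assumption2_def)

lemma antimono: "0 \<le> a \<Longrightarrow> a \<le> b \<Longrightarrow> p b \<le> p a"
  using assm2 by (simp add: assumption2_def)

lemma integrable: "0 \<le> a \<Longrightarrow> p integrable_on {a..b}"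
  by (rule integrable_continuous_interval) (rule continuous_on_subset[OF continuous], auto)

lemma integral_split:
  "0 \<le> a \<Longrightarrow> a \<le> b \<Longrightarrow> integral {0..b} p = integral {0..a} p + integral {a..b} p"
  using Henstock_Kurzweil_Integration.integral_combine[where a=0 and c=a and b=b and f=p]
    integrable[of 0 b] by (simp add: add.commute)

lemma integral_upper: assumes "0 \<le> a" "a \<le> b" shows "integral {a..b} p \<le> (b - a) * p a"
proof -
  have "integral {a..b} p \<le> integral {a..b} (\<lambda>_. p a)"
    by (rule integral_le) (use integrable assms antimono in auto)
  then show ?thesis using assms by simp
qed

lemma integral_lower: assumes "0 \<le> a" "a \<le> b" shows "(b - a) * p b \<le> integral {a..b} p"
proof -
  have "integral {a..b} (\<lambda>_. p b) \<le> integral {a..b} p"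
    by (rule integral_le) (use integrable assms antimono in auto)
  then show ?thesis using assms by simp
qed

lemma has_lderiv: assumes "0 < X" shows "(p has_real_derivative lderiv p X) (at X within {..X})"
proof -
  obtain D where "(p has_real_derivative D) (at X within {..X})"
    using assm2 assms by (auto simp: assumption2_def)
  then show ?thesis using lderiv_eq by metis
qed

lemma lderiv_limit:
  "0 < X \<Longrightarrow> ((\<lambda>y. (p y - p X) / (y - X)) \<longlongrightarrow> lderiv p X) (at_left X)"
  using has_lderiv unfolding has_field_derivative_iff by (simp add: at_within_Iic_at_left)

lemma lderiv_nonpos: assumes "0 < X" shows "lderiv p X \<le> 0"
proof -
  have "eventually (\<lambda>y. (p y - p X) / (y - X) \<le> 0) (at_left X)"
    using eventually_at_left_real[OF assms] by eventually_elim
      (auto intro!: divide_nonneg_neg simp: antimono)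
  with lderiv_limit[OF assms] show ?thesis by (intro tendsto_upperbound) auto
qed

lemma integral_eq_rectangle_imp_flat:
  assumes "0 < X" "integral {0..X} p = X * p X"
  shows "p 0 = p X"
proof -
  have c: "continuous_on (cbox 0 X) (\<lambda>q. p q - p X)"
    by (intro continuous_intros continuous_on_subset[OF continuous]) auto
  have "((\<lambda>q. p q - p X) has_integral (integral {0..X} p - X * p X)) {0..X}"
    using has_integral_diff[OF integrable_integral[OF integrable[of 0 X]]
        has_integral_const_real[of "p X" 0 X]] assms by simp
  then have "((\<lambda>q. p q - p X) has_integral 0) (cbox 0 X)" using assms by simp
  from has_integral_0_cbox_imp_0[OF c _ this, of 0] assms show ?thesis
    by (auto simp: antimono)
qed

lemma convex_flat:
  assumes cp: "convex_on {0..} p" and "0 < X" "lderiv p X = 0" "X \<le> q"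
  shows "p X \<le> p q"
proof (cases "X = q")
  case False
  then have "X < q" using assms by simp
  have "eventually (\<lambda>y. (p y - p X) / (y - X) \<le> (p X - p q) / (X - q)) (at_left X)"
    using eventually_at_left_real[OF assms(2)]
  proof eventually_elim
    case (elim y)
    from convex_on_slope_le[OF cp, of y q X] elim \<open>X < q\<close>
    have "(p y - p X) / (y - X) \<le> (p y - p q) / (y - q)"
      "(p y - p q) / (y - q) \<le> (p X - p q) / (X - q)"
      by auto
    then show ?case by linarith
  qed
  with lderiv_limit[OF assms(2)] assms(3) have "0 \<le> (p X - p q) / (X - q)"
    by (intro tendsto_upperbound) auto
  with \<open>X < q\<close> show ?thesis by (simp add: divide_simps split: if_splits)
qed simp

text \<open>
  The key estimate for convex demand: if p is not constant, the revenue bound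
  X p(X) + p'_-(X) Q coming from the first-order conditions (Q > 0) falls strictly
  short of the gross consumer value of X.
\<close>

lemma revenue_bound_lt_integral:
  assumes cp: "convex_on {0..} p" and "0 < X" "0 < Q" "0 \<le> R" "p R < p 0"
  shows "X * p X + lderiv p X * Q < integral {0..X} p"
proof (rule ccontr)
  assume "\<not> ?thesis"
  moreover have "X * p X \<le> integral {0..X} p" using integral_lower[of 0 X] assms by simp
  moreover have "lderiv p X * Q \<le> 0"
    using lderiv_nonpos[OF \<open>0 < X\<close>] \<open>0 < Q\<close> by (simp add: mult_nonpos_nonneg)
  ultimately have "lderiv p X * Q = 0" "integral {0..X} p = X * p X" by linarith+
  with \<open>0 < Q\<close> have "lderiv p X = 0" "integral {0..X} p = X * p X" by simp_all
  then have "p 0 = p X" using integral_eq_rectangle_imp_flat \<open>0 < X\<close> by blast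
  moreover have "p X \<le> p R"
  proof (cases "X \<le> R")
    case True
    with convex_flat[OF cp \<open>0 < X\<close> \<open>lderiv p X = 0\<close>] show ?thesis by blast
  next
    case False
    with antimono \<open>0 \<le> R\<close> show ?thesis by simp
  qed
  ultimately show False using \<open>p R < p 0\<close> by simp
qed

end


section \<open>Welfare and existence of social optima\<close>

lemma total_nonneg: "nonneg_vec N y \<Longrightarrow> 0 \<le> total N y"
  unfolding total_def nonneg_vec_def by (auto intro: sum_nonneg)

lemma welfare_cong:
  "(\<And>n. n < N \<Longrightarrow> y n = z n) \<Longrightarrow> welfare N p C y = welfare N p C z"
  unfolding welfare_def total_def by simp

definition output_box :: "nat \<Rightarrow> real \<Rightarrow> (nat \<Rightarrow> real) set" where
  "output_box N R = PiE UNIV (\<lambda>n. if n < N then {0..R} else {0})"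

lemma output_box_iff:
  "y \<in> output_box N R \<longleftrightarrow> (\<forall>n. if n < N then 0 \<le> y n \<and> y n \<le> R else y n = 0)"
  unfolding output_box_def by (auto simp: PiE_iff split: if_splits)

lemma compact_output_box: "compact (output_box N R)"
proof -
  have "compactin (product_topology (\<lambda>i. euclidean) UNIV) (output_box N R)"
    unfolding output_box_def by (subst compactin_PiE) auto
  then show ?thesis by (simp add: euclidean_product_topology)
qed

lemma welfare_continuous_on_box:
  assumes inv: "inverse_demand p" and cont: "\<And>n. n < N \<Longrightarrow> continuous_on {0..} (C n)"
  shows "continuous_on (output_box N R) (welfare N p C)"
proof -
  let ?K = "output_box N R"
  have coord: "\<And>n. continuous_on ?K (\<lambda>y. y n)"
    by (rule continuous_on_subset[OF continuous_on_product_coordinates]) auto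
  have "total N y \<in> {0..real N * R}" if "y \<in> ?K" for y
  proof -
    have "total N y \<le> (\<Sum>n<N. R)" unfolding total_def
      by (intro sum_mono) (use that in \<open>simp add: output_box_iff\<close>)
    with that show ?thesis by (auto simp: total_def output_box_iff intro!: sum_nonneg)
  qed
  then have total_range: "total N ` ?K \<subseteq> {0..real N * R}" by blast
  have total_cont: "continuous_on ?K (\<lambda>y. total N y)"
    unfolding total_def by (intro continuous_on_sum coord)
  have integral_cont: "continuous_on {0..real N * R} (\<lambda>t. integral {0..t} p)"
    by (intro indefinite_integral_continuous_1 inverse_demand.integrable[OF inv]) simp
  have costs_cont: "continuous_on ?K (\<lambda>y. \<Sum>n<N. C n (y n))"
  proof (rule continuous_on_sum)
    fix n assume "n \<in> {..<N}"
    then show "continuous_on ?K (\<lambda>y. C n (y n))"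
      by (intro continuous_on_compose2[OF cont[of n] coord]) (auto simp: output_box_iff)
  qed
  have "welfare N p C = (\<lambda>y. integral {0..total N y} p - (\<Sum>n<N. C n (y n)))"
    by (rule ext) (simp add: welfare_def)
  then show ?thesis
    using continuous_on_diff[OF continuous_on_compose2[OF integral_cont total_cont total_range]
        costs_cont]
    by simp
qed

text \<open>
  Assumption 3 makes large aggregate outputs wasteful: if the total exceeds R,
  scaling all outputs down to total R does not decrease welfare, since the saved
  cost per unit is at least min C_n'(0) \<ge> p(R) and the lost value per unit at most p(R).
\<close>

lemma welfare_scale_down:
  assumes a1: "assumption1 N C" and inv: "inverse_demand p"
    and R: "0 < R" "p R \<le> min_marginal_cost_at_0 N C"
    and y: "nonneg_vec N y" and large: "R < total N y"
  shows "welfare N p C y \<le> welfare N p C (\<lambda>n. (R / total N y) * y n)"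
proof -
  interpret inverse_demand p by (rule inv)
  define Y where "Y = total N y"
  define t where "t = R / Y"
  have t: "0 < t" "t < 1" "t * Y = R" using R large by (auto simp: t_def Y_def)
  have yn: "0 \<le> y n" if "n < N" for n using y that by (simp add: nonneg_vec_def)
  have "p R * ((1 - t) * y n) \<le> C n (y n) - C n (t * y n)" if n: "n < N" for n
  proof -
    interpret convex_cost "C n" using convex_cost_of_assumption1[OF a1 n] .
    have "p R \<le> rderiv (C n) 0"
      using R(2) n unfolding min_marginal_cost_at_0_def by (auto intro: order_trans)
    then have "p R * ((1 - t) * y n) \<le> rderiv (C n) 0 * ((1 - t) * y n)"
      using yn[OF n] t by (intro mult_right_mono) auto
    also have "\<dots> = rderiv (C n) 0 * (y n - t * y n)" by (simp add: algebra_simps)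
    also have "\<dots> \<le> C n (y n) - C n (t * y n)"
      using chord[of "t * y n" "y n"] yn[OF n] t by (simp add: mult_left_le_one_le)
    finally show ?thesis .
  qed
  then have "(\<Sum>n<N. p R * ((1 - t) * y n)) \<le> (\<Sum>n<N. C n (y n) - C n (t * y n))"
    by (intro sum_mono) simp
  moreover have "(\<Sum>n<N. p R * ((1 - t) * y n)) = p R * ((1 - t) * Y)"
    by (simp add: Y_def total_def sum_distrib_left)
  moreover have "p R * ((1 - t) * Y) = p R * (Y - R)" using t by (simp add: algebra_simps)
  ultimately have "p R * (Y - R) \<le> (\<Sum>n<N. C n (y n)) - (\<Sum>n<N. C n (t * y n))"
    by (simp add: sum_subtractf)
  moreover have "integral {0..Y} p \<le> integral {0..R} p + (Y - R) * p R"
    using integral_split[of R Y] integral_upper[of R Y] R large by (simp add: Y_def)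
  moreover have "total N (\<lambda>n. t * y n) = R"
    using t by (simp add: total_def Y_def sum_distrib_left[symmetric])
  ultimately show ?thesis
    by (simp add: welfare_def Y_def t_def algebra_simps)
qed

lemma social_optimum_exists:
  assumes "0 < N" and a1: "assumption1 N C" and a2: "assumption2 p" and a3: "assumption3 N p C"
  shows "\<exists>z. social_optimum N p C z"
proof -
  have inv: "inverse_demand p" using a2 by (rule inverse_demand.intro)
  obtain R where R: "0 < R" "p R \<le> min_marginal_cost_at_0 N C"
    using a3 by (auto simp: assumption3_def)
  let ?K = "output_box N R"
  have "continuous_on ?K (welfare N p C)"
    using welfare_continuous_on_box[OF inv] a1 by (simp add: assumption1_def)
  moreover have "(\<lambda>_. 0) \<in> ?K" using R by (simp add: output_box_iff)
  ultimately obtain z where z: "z \<in> ?K" and zmax: "\<And>y. y \<in> ?K \<Longrightarrow> welfare N p C y \<le> welfare N p C z"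
    using continuous_attains_sup[OF compact_output_box] by blast
  have "nonneg_vec N z" using z by (auto simp: output_box_iff nonneg_vec_def)
  moreover have "welfare N p C y \<le> welfare N p C z" if y: "nonneg_vec N y" for y
  proof -
    have yn: "0 \<le> y n" "y n \<le> total N y" if "n < N" for n
    proof -
      show "0 \<le> y n" using y that by (simp add: nonneg_vec_def)
      show "y n \<le> total N y" unfolding total_def
        by (rule member_le_sum) (use y that in \<open>auto simp: nonneg_vec_def\<close>)
    qed
    obtain s where s: "0 < s" "s \<le> 1" "s * total N y \<le> R"
      and ws: "welfare N p C y \<le> welfare N p C (\<lambda>n. s * y n)"
    proof (cases "total N y \<le> R")
      case True
      show ?thesis by (rule that[of 1]) (use True in simp_all)
    next
      case False
      with R have "0 < total N y" by simp
      show ?thesis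
      proof (rule that[of "R / total N y"])
        show "0 < R / total N y" "R / total N y \<le> 1" "R / total N y * total N y \<le> R"
          using False \<open>0 < total N y\<close> R by simp_all
        show "welfare N p C y \<le> welfare N p C (\<lambda>n. R / total N y * y n)"
          by (rule welfare_scale_down[OF a1 inv R y]) (use False in linarith)
      qed
    qed
    define y' where "y' n = (if n < N then s * y n else 0)" for n
    have "s * y n \<le> R" if "n < N" for n
    proof -
      have "s * y n \<le> s * total N y" using yn(2)[OF that] s(1) by (intro mult_left_mono) auto
      also have "\<dots> \<le> R" by (rule s(3))
      finally show ?thesis .
    qed
    then have "y' \<in> ?K" using yn s by (simp add: output_box_iff y'_def)
    moreover have "welfare N p C y' = welfare N p C (\<lambda>n. s * y n)"
      by (rule welfare_cong) (simp add: y'_def)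
    ultimately show ?thesis using ws zmax[of y'] by simp
  qed
  ultimately show ?thesis unfolding social_optimum_def by blast
qed


lemma assumption1_linear:
  assumes "\<And>n. n < N \<Longrightarrow> 0 \<le> a n"
  shows "assumption1 N (\<lambda>n y. a n * y)"
  unfolding assumption1_def
proof (intro allI impI conjI)
  fix n assume n: "n < N"
  show "convex_on {0..} (\<lambda>y. a n * y)"
    by (intro convex_on_cmul convex_on_ident[THEN iffD2]) (auto simp: assms[OF n])
  show "mono_on {0..} (\<lambda>y. a n * y)"
    using assms[OF n] by (auto simp: mono_on_def mult_left_mono)
  have "deriv (\<lambda>y. a n * y) = (\<lambda>_. a n)"
    by (rule ext, rule DERIV_imp_deriv) (auto intro!: derivative_eq_intros)
  then show "continuous_on {0<..} (deriv (\<lambda>y. a n * y))" by simp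
  show "continuous_on {0..} (\<lambda>y. a n * y)" by (intro continuous_intros)
  show "(\<lambda>y. a n * y) differentiable (at z)" for z by (intro derivative_intros)
  show "a n * 0 = 0" by simp
qed

lemma min_marginal_cost_linear:
  "min_marginal_cost_at_0 N (\<lambda>n y. a n * y) = Min (a ` {..<N})"
  by (simp add: min_marginal_cost_at_0_def rderiv_linear)

lemma assumption4_linear:
  assumes "0 < N" and inv: "inverse_demand p" and x: "nonneg_vec N x"
    and pos: "0 < welfare N p (\<lambda>n y. a n * y) x"
  shows "assumption4 N p (\<lambda>n y. a n * y)"
proof -
  interpret inverse_demand p by (rule inv)
  define X where "X = total N x"
  have X: "0 \<le> X" using total_nonneg[OF x] by (simp add: X_def)
  have "Min (a ` {..<N}) * x n \<le> a n * x n" if "n < N" for n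
  proof (rule mult_right_mono)
    show "Min (a ` {..<N}) \<le> a n" by (rule Min_le) (use that in auto)
    show "0 \<le> x n" using x that by (simp add: nonneg_vec_def)
  qed
  then have "Min (a ` {..<N}) * X \<le> (\<Sum>n<N. a n * x n)"
    unfolding X_def total_def sum_distrib_left by (intro sum_mono) simp
  moreover have "integral {0..X} p \<le> X * p 0"
    using integral_upper[of 0 X] X by simp
  moreover have "0 < integral {0..X} p - (\<Sum>n<N. a n * x n)"
    using pos by (simp add: welfare_def X_def)
  ultimately have "Min (a ` {..<N}) * X < X * p 0" by linarith
  then have "Min (a ` {..<N}) < p 0"
    using X by (metis mult.commute mult_right_mono not_less)
  then show ?thesis by (simp add: assumption4_def min_marginal_cost_linear)
qed


section \<open>Linearising the costs at a Cournot candidate\<close>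

definition linearized :: "(nat \<Rightarrow> real \<Rightarrow> real) \<Rightarrow> (nat \<Rightarrow> real) \<Rightarrow> nat \<Rightarrow> real \<Rightarrow> real" where
  "linearized C x = (\<lambda>n y. rderiv (C n) (x n) * y)"

lemma linearized_slope_bounds:
  assumes "assumption1 N C" "nonneg_vec N x" "n < N"
  shows "0 \<le> rderiv (C n) 0" "rderiv (C n) 0 \<le> rderiv (C n) (x n)"
proof -
  interpret convex_cost "C n" using convex_cost_of_assumption1 assms by blast
  show "0 \<le> rderiv (C n) 0" by (rule rderiv0_nonneg)
  show "rderiv (C n) 0 \<le> rderiv (C n) (x n)"
    using assms by (intro rderiv0_le) (simp add: nonneg_vec_def)
qed

lemma assumption1_linearized:
  "assumption1 N C \<Longrightarrow> nonneg_vec N x \<Longrightarrow> assumption1 N (linearized C x)"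
  unfolding linearized_def
  by (rule assumption1_linear) (meson linearized_slope_bounds order_trans)

lemma assumption3_linearized:
  assumes "0 < N" "assumption1 N C" "nonneg_vec N x" "assumption3 N p C"
  shows "assumption3 N p (linearized C x)"
proof -
  have "min_marginal_cost_at_0 N C \<le> rderiv (C n) (x n)" if "n < N" for n
    using linearized_slope_bounds(2)[OF assms(2,3) that] that
    unfolding min_marginal_cost_at_0_def
    by (meson Min_le finite_imageI finite_lessThan imageI lessThan_iff order_trans)
  then have "min_marginal_cost_at_0 N C \<le> min_marginal_cost_at_0 N (linearized C x)"
    using assms(1) unfolding linearized_def min_marginal_cost_linear
    by (intro Min.boundedI) auto
  with assms(4) show ?thesis by (auto simp: assumption3_def intro: order_trans)
qed

lemma cournot_candidate_linearized:
  "cournot_candidate N p C x \<Longrightarrow> cournot_candidate N p (linearized C x) x"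
  by (simp add: cournot_candidate_def linearized_def rderiv_linear)

lemma cournot_candidate_total_pos:
  assumes "0 < N" "assumption4 N p C" "cournot_candidate N p C x"
  shows "0 < total N x"
proof (rule ccontr)
  have x: "nonneg_vec N x" using assms(3) by (simp add: cournot_candidate_def)
  assume "\<not> 0 < total N x"
  with total_nonneg[OF x] have X0: "total N x = 0" by simp
  then have x0: "x n = 0" if "n < N" for n
    using x that sum_nonneg_eq_0_iff[of "{..<N}" x] by (auto simp: total_def nonneg_vec_def)
  have "p 0 \<le> rderiv (C n) 0" if "n < N" for n
    using assms(3) that X0 x0[OF that] by (auto simp: cournot_candidate_def)
  then have "p 0 \<le> min_marginal_cost_at_0 N C"
    using assms(1) unfolding min_marginal_cost_at_0_def by (intro Min.boundedI) auto
  with assms(2) show False by (simp add: assumption4_def)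
qed

lemma candidate_payment_bound:
  assumes "cournot_candidate N p C x"
  shows "(\<Sum>n<N. rderiv (C n) (x n) * x n)
           \<le> total N x * p (total N x) + lderiv p (total N x) * (\<Sum>n<N. x n * x n)"
proof -
  let ?X = "total N x"
  have "rderiv (C n) (x n) * x n \<le> x n * (p ?X + x n * lderiv p ?X)" if n: "n < N" for n
  proof (cases "x n = 0")
    case False
    have "0 \<le> x n" using assms n by (simp add: cournot_candidate_def nonneg_vec_def)
    with False have "0 < x n" by simp
    with assms n have "rderiv (C n) (x n) \<le> p ?X + x n * lderiv p ?X"
      by (simp add: cournot_candidate_def)
    from mult_right_mono[OF this \<open>0 \<le> x n\<close>] show ?thesis by (simp add: mult.commute)
  qed simp
  then have "(\<Sum>n<N. rderiv (C n) (x n) * x n) \<le> (\<Sum>n<N. x n * (p ?X + x n * lderiv p ?X))"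
    by (intro sum_mono) simp
  also have "\<dots> = (\<Sum>n<N. x n * p ?X + lderiv p ?X * (x n * x n))"
    by (intro sum.cong) (simp_all add: algebra_simps)
  also have "\<dots> = ?X * p ?X + lderiv p ?X * (\<Sum>n<N. x n * x n)"
    by (simp add: total_def sum.distrib sum_distrib_left sum_distrib_right)
  finally show ?thesis .
qed

lemma linearized_welfare_pos:
  assumes "0 < N" and a2: "assumption2 p" and a3: "assumption3 N p C" and a4: "assumption4 N p C"
    and cp: "convex_on {0..} p" and cc: "cournot_candidate N p C x"
  shows "0 < welfare N p (linearized C x) x"
proof -
  interpret inverse_demand p using a2 by (rule inverse_demand.intro)
  have X: "0 < total N x" by (rule cournot_candidate_total_pos[OF \<open>0 < N\<close> a4 cc])
  have x: "nonneg_vec N x" using cc by (simp add: cournot_candidate_def)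
  have "\<exists>n<N. 0 < x n"
  proof (rule ccontr)
    assume none: "\<not> (\<exists>n<N. 0 < x n)"
    have "x n = 0" if "n < N" for n
      using x that none unfolding nonneg_vec_def by (meson antisym not_less)
    then have "total N x = 0" by (simp add: total_def)
    with X show False by simp
  qed
  then obtain n where n: "n < N" "0 < x n" by blast
  have "x n * x n \<le> (\<Sum>n<N. x n * x n)"
    by (rule member_le_sum) (use n in auto)
  moreover have "0 < x n * x n" using n by simp
  ultimately have Q: "0 < (\<Sum>n<N. x n * x n)" by linarith
  obtain R where R: "0 < R" "p R \<le> min_marginal_cost_at_0 N C"
    using a3 by (auto simp: assumption3_def)
  with a4 have "p R < p 0" by (simp add: assumption4_def)
  with revenue_bound_lt_integral[OF cp X Q less_imp_le[OF R(1)]] candidate_payment_bound[OF cc]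
  have "(\<Sum>n<N. rderiv (C n) (x n) * x n) < integral {0..total N x} p" by linarith
  then show ?thesis by (simp add: welfare_def linearized_def)
qed

text \<open>
  The subgradient inequality makes x maximise W - W_lin: for every y \<ge> 0 the
  welfare loss from linearising is at most the loss at x itself.
\<close>

lemma welfare_linearization_gap:
  assumes a1: "assumption1 N C" and x: "nonneg_vec N x" and y: "nonneg_vec N y"
  shows "welfare N p C y - welfare N p (linearized C x) y
           \<le> welfare N p C x - welfare N p (linearized C x) x"
proof -
  have "rderiv (C n) (x n) * y n - C n (y n) \<le> rderiv (C n) (x n) * x n - C n (x n)"
    if n: "n < N" for n
  proof -
    interpret convex_cost "C n" using convex_cost_of_assumption1[OF a1 n] .
    show ?thesis using subgradient[of "x n" "y n"] x y n
      by (simp add: nonneg_vec_def algebra_simps)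
  qed
  then have "(\<Sum>n<N. rderiv (C n) (x n) * y n - C n (y n))
      \<le> (\<Sum>n<N. rderiv (C n) (x n) * x n - C n (x n))"
    by (intro sum_mono) simp
  then show ?thesis by (simp add: welfare_def linearized_def sum_subtractf)
qed

text \<open>Taking y = 0 shows that linearising lowers the welfare of x, by D \<ge> 0.\<close>

lemma linearization_gap_nonneg:
  assumes "assumption1 N C" "nonneg_vec N x"
  shows "0 \<le> welfare N p C x - welfare N p (linearized C x) x"
proof -
  have "welfare N p C (\<lambda>_. 0) - welfare N p (linearized C x) (\<lambda>_. 0) = 0"
    using assms(1) by (simp add: welfare_def linearized_def total_def assumption1_def)
  moreover have "nonneg_vec N (\<lambda>_. 0)" by (simp add: nonneg_vec_def)
  ultimately show ?thesis using welfare_linearization_gap[OF assms, where p=p] by fastforce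
qed

lemma ratio_le_shifted_ratio:
  fixes a b c D :: real
  assumes "0 < a" "a \<le> b" "0 \<le> D" "a + D \<le> c" "c \<le> b + D"
  shows "a / b \<le> (a + D) / c"
proof -
  have "a * c \<le> a * (b + D)" using assms by (simp add: mult_left_mono)
  also have "\<dots> \<le> (a + D) * b" using assms by (simp add: algebra_simps mult_left_mono)
  moreover have "0 < b" "0 < c" using assms by linarith+
  ultimately show ?thesis by (simp add: divide_simps)
qed

lemma efficiency_linearized:
  assumes a1: "assumption1 N C" and x: "nonneg_vec N x"
    and opt: "\<exists>z. social_optimum N p C z" and opt_lin: "\<exists>z. social_optimum N p (linearized C x) z"
    and pos: "0 < welfare N p (linearized C x) x"
  shows "0 < efficiency N p (linearized C x) x \<and>
         efficiency N p (linearized C x) x \<le> efficiency N p C x"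
proof -
  define z where "z = (SOME z. social_optimum N p C z)"
  define zl where "zl = (SOME z. social_optimum N p (linearized C x) z)"
  have z: "social_optimum N p C z" using someI_ex[OF opt] by (simp add: z_def)
  have zl: "social_optimum N p (linearized C x) zl" using someI_ex[OF opt_lin] by (simp add: zl_def)
  have z_nonneg: "nonneg_vec N z" using z by (simp add: social_optimum_def)
  define a where "a = welfare N p (linearized C x) x"
  define b where "b = welfare N p (linearized C x) zl"
  define c where "c = welfare N p C z"
  define D where "D = welfare N p C x - a"
  have "0 < a" using pos by (simp add: a_def)
  have "a \<le> b" using zl x unfolding social_optimum_def a_def b_def by blast
  have "a + D \<le> c" using z x unfolding social_optimum_def c_def D_def by auto
  have "c \<le> welfare N p (linearized C x) z + D"
    using welfare_linearization_gap[OF a1 x z_nonneg, where p=p] unfolding c_def D_def a_def by linarith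
  also have "\<dots> \<le> b + D"
    using zl z_nonneg unfolding social_optimum_def b_def by auto
  finally have "c \<le> b + D" .
  have "0 \<le> D" using linearization_gap_nonneg[OF a1 x, where p=p] by (simp add: D_def a_def)
  have "a / b \<le> (a + D) / c" by (rule ratio_le_shifted_ratio) fact+
  moreover have "0 < a / b" using \<open>0 < a\<close> \<open>a \<le> b\<close> by simp
  moreover have "efficiency N p (linearized C x) x = a / b" "efficiency N p C x = (a + D) / c"
    by (simp_all add: efficiency_def a_def b_def c_def D_def z_def zl_def)
  ultimately show ?thesis by simp
qed


theorem proposition6:
  fixes N :: nat and p :: "real \<Rightarrow> real" and C :: "nat \<Rightarrow> real \<Rightarrow> real"
    and x :: "nat \<Rightarrow> real"
  assumes "0 < N"
    and "assumption1 N C" and "assumption2 p" and "assumption3 N p C" and "assumption4 N p C"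
    and "convex_on {0..} p"
    and "cournot_candidate N p C x"
    and "\<not> social_optimum N p C x"
  shows "assumption1 N (\<lambda>n y. rderiv (C n) (x n) * y) \<and>
         assumption2 p \<and>
         assumption3 N p (\<lambda>n y. rderiv (C n) (x n) * y) \<and>
         assumption4 N p (\<lambda>n y. rderiv (C n) (x n) * y) \<and>
         cournot_candidate N p (\<lambda>n y. rderiv (C n) (x n) * y) x \<and>
         0 < efficiency N p (\<lambda>n y. rderiv (C n) (x n) * y) x \<and>
         efficiency N p (\<lambda>n y. rderiv (C n) (x n) * y) x \<le> efficiency N p C x"
proof -
  note N = assms(1) and a1 = assms(2) and a2 = assms(3) and a3 = assms(4) and a4 = assms(5)
    and cp = assms(6) and cc = assms(7)
  have x: "nonneg_vec N x" using cc by (simp add: cournot_candidate_def)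
  have lin: "(\<lambda>n y. rderiv (C n) (x n) * y) = linearized C x" by (simp add: linearized_def)
  have a1_lin: "assumption1 N (linearized C x)" by (rule assumption1_linearized[OF a1 x])
  have a3_lin: "assumption3 N p (linearized C x)" by (rule assumption3_linearized[OF N a1 x a3])
  have pos: "0 < welfare N p (linearized C x) x"
    by (rule linearized_welfare_pos[OF N a2 a3 a4 cp cc])
  have a4_lin: "assumption4 N p (linearized C x)"
    using assumption4_linear[OF N inverse_demand.intro[OF a2] x] pos
    by (simp add: linearized_def)
  have "0 < efficiency N p (linearized C x) x \<and>
        efficiency N p (linearized C x) x \<le> efficiency N p C x"
    by (rule efficiency_linearized[OF a1 x social_optimum_exists[OF N a1 a2 a3]
          social_optimum_exists[OF N a1_lin a2 a3_lin] pos])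
  then show ?thesis
    unfolding lin using a1_lin a2 a3_lin a4_lin cournot_candidate_linearized[OF cc] by blast
qed

end
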